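(* Let $p$ be a prime, let $U$ be an open subgroup of $S$, and let $H\neq\{t\}$ be a closed normal subgroup of $U$. Then $H$ is infinite, and $H$ contains elements of arbitrarily large depth: for every $N\ge1$ there is $h\in H$ with $h\neq t$ and $h\equiv t\pmod{t^N}$.
   Context: $S$ denotes the group, under substitution $(f\circ g)(t)=f(g(t))$, of all power series $t+\sum_{k\ge1}(a_{pk}t^{pk}+a_{pk+1}t^{pk+1})$ with coefficients in $\mathbb F_p$; it is a pro-$p$ group with the topology in which the subgroups $\{f\in S: f\equiv t\bmod t^n\}$ form a base of open neighbourhoods of the identity $t$. *)

theory Defs
  imports "HOL-Algebra.Coset" "HOL-Computational_Algebra.Formal_Power_Series"
begin

text \<open>The base field F_p is modelled as a finite field type 'a with CARD('a) = p
  (p prime); every such field is (isomorphic to) F_p.\<close>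

definition S_set :: "nat \<Rightarrow> ('a::field) fps set" where
  "S_set p = {f. fps_nth f 0 = 0 \<and> fps_nth f 1 = 1 \<and>
      (\<forall>n\<ge>2. fps_nth f n \<noteq> 0 \<longrightarrow> p \<le> n \<and> (n mod p = 0 \<or> n mod p = 1))}"

definition S_grp :: "nat \<Rightarrow> ('a::field) fps monoid" where
  "S_grp p = \<lparr>carrier = S_set p, monoid.mult = (\<lambda>f g. f oo g), one = fps_X\<rparr>"

definition cong_mod_tpow :: "('a::field) fps \<Rightarrow> 'a fps \<Rightarrow> nat \<Rightarrow> bool" where
  "cong_mod_tpow f g n \<longleftrightarrow> (\<forall>i<n. fps_nth f i = fps_nth g i)"

definition S_nbhd :: "nat \<Rightarrow> nat \<Rightarrow> ('a::field) fps set" where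
  "S_nbhd p n = {f \<in> S_set p. cong_mod_tpow f fps_X n}"

text \<open>An open subgroup of S: a subgroup containing some basic open neighbourhood of t
  (a subgroup of a topological group is open iff it contains a neighbourhood of 1).\<close>
definition open_subgroup_S :: "nat \<Rightarrow> ('a::field) fps set \<Rightarrow> bool" where
  "open_subgroup_S p U \<longleftrightarrow> subgroup U (S_grp p) \<and> (\<exists>n. S_nbhd p n \<subseteq> U)"

text \<open>The basic neighbourhoods of f in S are
  f o S_nbhd p n = {g in S. g = f mod t^n}; so A is closed iff every f in S
  approximated modulo every power t^n by elements of A lies in A.\<close>
definition closed_in_S :: "nat \<Rightarrow> ('a::field) fps set \<Rightarrow> bool" where
  "closed_in_S p A \<longleftrightarrow> A \<subseteq> S_set p \<and>
     (\<forall>f \<in> S_set p. (\<forall>n. \<exists>h\<in>A. cong_mod_tpow h f n) \<longrightarrow> f \<in> A)"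

end

theory Submission
  imports Defs "HOL-Number_Theory.Residues"
begin

text \<open>
  A nontrivial h \<in> H has the form t + t^m q with q(0) \<noteq> 0, and the shape of S forces
  m \<equiv> 0 or 1 (mod p). For large n \<equiv> 1 - m (mod p) the series g = t + t^n lies in U, and
  h \<circ> g - g \<circ> h = (m - n) q(0) t^(m+n-1) + O(t^(m+n)) with m - n a unit of F_p. So the
  commutator of h and g, which lies in H by normality, is nontrivial and congruent to t
  modulo t^(m+n-1). A finite set cannot contain nontrivial elements of unbounded depth.
\<close>

unbundle fps_syntax

lemma fps_power_nth_agree_below:
  fixes a b :: "'a::comm_ring_1 fps"
  assumes "\<And>i. i < K \<Longrightarrow> a $ i = b $ i" and "i < K"
  shows "(a ^ j) $ i = (b ^ j) $ i"
  using \<open>i < K\<close>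
proof (induction j arbitrary: i)
  case 0
  then show ?case by simp
next
  case (Suc j)
  then show ?case
    using assms(1) by (auto simp: fps_mult_nth intro!: sum.cong)
qed

lemma fps_compose_nth_agree_below:
  fixes a b k :: "'a::comm_ring_1 fps"
  assumes "\<And>i. i < K \<Longrightarrow> a $ i = b $ i" and "i < K"
  shows "(k oo a) $ i = (k oo b) $ i"
  using fps_power_nth_agree_below[OF assms(1)] assms(2)
  by (auto simp: fps_compose_nth intro!: sum.cong)

lemma fps_eq_X_power_mult_shift:
  fixes f :: "'a::comm_ring_1 fps"
  assumes "\<And>i. i < n \<Longrightarrow> f $ i = 0"
  shows "f = fps_X ^ n * fps_shift n f"
  by (rule fps_ext) (simp add: fps_X_power_mult_nth assms)

lemma one_plus_power_eq:
  fixes y :: "'a::comm_ring_1"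
  shows "\<exists>s. (1 + y) ^ m = 1 + of_nat m * y + y\<^sup>2 * s"
proof (induction m)
  case 0
  then show ?case by (intro exI[of _ 0]) simp
next
  case (Suc m)
  then obtain s where "(1 + y) ^ m = 1 + of_nat m * y + y\<^sup>2 * s" by blast
  then show ?case
    by (intro exI[of _ "of_nat m + s + s * y"]) (simp add: algebra_simps power2_eq_square)
qed

lemma fps_commutator_X_plus_X_power:
  fixes q :: "'a::idom fps"
  assumes "2 \<le> m" and "2 \<le> n"
  defines "h \<equiv> fps_X + fps_X ^ m * q" and "g \<equiv> fps_X + fps_X ^ n"
  shows "\<exists>F. (h oo g) - (g oo h) = fps_X ^ (m + n - 1) * F \<and>
             F $ 0 = (of_nat m - of_nat n) * q $ 0"
proof -
  obtain a b where m: "m = a + 2" and n: "n = b + 2"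
    using assms(1,2) by (metis add.commute le_Suc_ex)
  define X :: "'a fps" where "X = fps_X"
  have g0: "g $ 0 = 0" and h0: "h $ 0 = 0"
    using assms(1,2) by (simp_all add: g_def h_def)
  have g_oo_h: "g oo h = h + h ^ n"
    using h0 by (simp add: g_def fps_compose_add_distrib fps_X_power_compose)
  have h_oo_g: "h oo g = g + g ^ m * (q oo g)"
    using g0 by (simp add: h_def fps_compose_add_distrib fps_compose_mult_distrib fps_X_power_compose)
  have "((q oo g) - q) $ i = 0" if "i < n" for i
    using fps_compose_nth_agree_below[of n g fps_X i q] that by (simp add: g_def)
  then have "(q oo g) - q = X ^ n * fps_shift n ((q oo g) - q)"
    unfolding X_def by (rule fps_eq_X_power_mult_shift)
  then obtain r where q_oo_g: "q oo g = q + X ^ n * r"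
    by (metis add_diff_cancel_left' diff_add_cancel)
  \<comment> \<open>With A = X^a and B = X^b all remaining exponents are numerals, so the final
    identity is a plain ring identity.\<close>
  define A B where "A = X ^ a" and "B = X ^ b"
  have Xm: "X ^ m = X\<^sup>2 * A" and Xn: "X ^ n = X\<^sup>2 * B"
    and Xmn: "X ^ (m + n - 1) = X ^ 3 * A * B"
    by (simp_all add: A_def B_def m n power_add power2_eq_square power3_eq_cube mult_ac)
  have g_X: "g = X * (1 + X * B)" and h_X: "h = X * (1 + X * A * q)"
    by (simp_all add: g_def h_def Xm Xn algebra_simps power2_eq_square flip: X_def)
  obtain s where s: "(1 + X * B) ^ m = 1 + of_nat m * (X * B) + (X * B)\<^sup>2 * s"
    using one_plus_power_eq by blast
  obtain t where t: "(1 + X * A * q) ^ n = 1 + of_nat n * (X * A * q) + (X * A * q)\<^sup>2 * t"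
    using one_plus_power_eq by blast
  define F where "F = (of_nat m - of_nat n) * q + X * B * s * q
      + X * (1 + of_nat m * (X * B) + (X * B)\<^sup>2 * s) * r - X * A * q\<^sup>2 * t"
  have "(h oo g) - (g oo h) = X * (1 + X * B) + (X ^ m * (1 + X * B) ^ m) * (q + X ^ n * r)
      - X * (1 + X * A * q) - X ^ n * (1 + X * A * q) ^ n"
    unfolding h_oo_g g_oo_h q_oo_g by (simp add: g_X h_X power_mult_distrib)
  also have "\<dots> = X ^ (m + n - 1) * F"
    unfolding s t Xm Xn Xmn F_def by (simp add: algebra_simps power2_eq_square power3_eq_cube)
  finally have "(h oo g) - (g oo h) = X ^ (m + n - 1) * F" .
  moreover have "F $ 0 = (of_nat m - of_nat n) * q $ 0"
    by (simp add: F_def X_def)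
  ultimately show ?thesis
    by (auto simp: X_def)
qed

lemma of_nat_eq_of_nat_mod:
  assumes "CHAR('a::semiring_1_cancel) dvd p"
  shows "(of_nat k :: 'a) = of_nat (k mod p)"
  using assms by (simp add: of_nat_eq_iff_cong_CHAR cong_dvd_modulus_nat[of _ _ p])

lemma of_nat_diff_nonzero_if_mod_sum_one:
  assumes "CHAR('a::ring_1) dvd p" and "m mod p + n mod p = 1"
  shows "(of_nat m - of_nat n :: 'a) \<noteq> 0"
proof -
  have "(of_nat m - of_nat n :: 'a) = of_nat (m mod p) - of_nat (n mod p)"
    using of_nat_eq_of_nat_mod[OF assms(1)] by metis
  then show ?thesis
    using assms(2) by (cases "m mod p") auto
qed

lemma exists_large_exponent_with_complementary_residue:
  fixes m p N :: nat
  assumes "2 \<le> p" and "m mod p = 0 \<or> m mod p = 1"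
  obtains n where "N \<le> n" and "p \<le> n" and "m mod p + n mod p = 1"
proof
  define n where "n = (1 - m mod p) + (N + 1) * p"
  have "N + 1 \<le> (N + 1) * p"
    using assms(1) mult_le_mono2[of 1 p "N + 1"] by simp
  then show "N \<le> n" and "p \<le> n"
    using assms(1) by (auto simp: n_def intro: order_trans[of _ "(N + 1) * p"])
  have "n mod p = (1 - m mod p) mod p"
    unfolding n_def by (rule mod_mult_self1)
  also have "\<dots> = 1 - m mod p"
    using assms(1) by simp
  finally show "m mod p + n mod p = 1"
    using assms(2) by auto
qed

lemma S_set_elem_eq_X_plus_X_power_mult:
  assumes "h \<in> S_set p" and "h \<noteq> fps_X"
  obtains m q where "h = fps_X + fps_X ^ m * q" and "q $ 0 \<noteq> 0" and "2 \<le> m"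
    and "m mod p = 0 \<or> m mod p = 1"
proof -
  define m where "m = subdegree (h - fps_X)"
  have "h - fps_X \<noteq> 0"
    using assms(2) by simp
  then have hm: "(h - fps_X) $ m \<noteq> 0"
    unfolding m_def by (rule nth_subdegree_nonzero)
  have below: "\<And>i. i < m \<Longrightarrow> (h - fps_X) $ i = 0"
    unfolding m_def by (rule nth_less_subdegree_zero)
  have h01: "h $ 0 = 0" "h $ 1 = 1"
    using assms(1) by (simp_all add: S_set_def)
  have "(h - fps_X) $ 0 = 0" and "(h - fps_X) $ 1 = 0"
    using h01 by simp_all
  then have "m \<noteq> 0" and "m \<noteq> 1"
    using hm by metis+
  then have m2: "2 \<le> m"
    by simp
  then have "h $ m \<noteq> 0"
    using hm by simp
  then have m_mod: "m mod p = 0 \<or> m mod p = 1"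
    using assms(1) m2 by (simp add: S_set_def)
  have h_eq: "h = fps_X + fps_X ^ m * fps_shift m (h - fps_X)"
    using fps_eq_X_power_mult_shift[OF below] by (simp add: algebra_simps)
  have "fps_shift m (h - fps_X) $ 0 \<noteq> 0"
    using hm by simp
  then show thesis
    using that[OF h_eq _ m2 m_mod] by blast
qed

lemma X_plus_X_power_in_S_nbhd:
  assumes "2 \<le> n" and "p \<le> n" and "n mod p = 0 \<or> n mod p = 1" and "N \<le> n"
  shows "(fps_X + fps_X ^ n :: 'a::field fps) \<in> S_nbhd p N"
  using assms by (auto simp: S_nbhd_def S_set_def cong_mod_tpow_def)

lemma (in normal) commutator_closed:
  assumes "h \<in> H" and "g \<in> carrier G"
  shows "inv (g \<otimes> h) \<otimes> (h \<otimes> g) \<in> H"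
proof -
  have "inv (g \<otimes> h) \<otimes> (h \<otimes> g) = inv h \<otimes> (inv g \<otimes> h \<otimes> g)"
    using assms by (simp add: inv_mult_group m_assoc)
  then show ?thesis
    using assms by (simp add: inv_op_closed1 m_inv_closed)
qed

lemma (in group) commutator_eq_one_iff:
  assumes "g \<in> carrier G" and "h \<in> carrier G"
  shows "inv (g \<otimes> h) \<otimes> (h \<otimes> g) = \<one> \<longleftrightarrow> h \<otimes> g = g \<otimes> h"
  using assms by (simp add: inv_solve_left')

lemma infinite_if_arbitrarily_close_elements:
  fixes f :: "'a::field fps"
  assumes "\<And>N. \<exists>h\<in>A. h \<noteq> f \<and> cong_mod_tpow h f N"
  shows "infinite A"
proof
  assume "finite A"
  define N where "N = Suc (Max ((\<lambda>h. subdegree (h - f)) ` A))"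
  obtain h where h: "h \<in> A" "h \<noteq> f" "cong_mod_tpow h f N"
    using assms by blast
  have "subdegree (h - f) < N"
    using \<open>finite A\<close> h(1) by (simp add: N_def le_imp_less_Suc)
  then have "(h - f) $ subdegree (h - f) = 0"
    using h(3) by (simp only: cong_mod_tpow_def fps_sub_nth) simp
  moreover have "(h - f) $ subdegree (h - f) \<noteq> 0"
    using h(2) by (intro nth_subdegree_nonzero) simp
  ultimately show False
    by contradiction
qed

lemma normal_subgroup_of_open_subgroup_has_deep_elements:
  fixes U H :: "('a::{field,finite}) fps set"
  assumes "2 \<le> p" and "card (UNIV :: 'a set) = p" and "open_subgroup_S p U"
    and "normal H ((S_grp p)\<lparr>carrier := U\<rparr>)" and "h \<in> H" and "h \<noteq> fps_X"
  shows "\<exists>c\<in>H. c \<noteq> fps_X \<and> cong_mod_tpow c fps_X N"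
proof -
  define G where "G = (S_grp p)\<lparr>carrier := U\<rparr>"
  interpret normal H G
    using assms(4) by (simp add: G_def)
  have G_simps [simp]: "carrier G = U" "\<And>x y. x \<otimes>\<^bsub>G\<^esub> y = x oo y" "\<one>\<^bsub>G\<^esub> = fps_X"
    by (simp_all add: G_def S_grp_def)
  obtain N0 where N0: "S_nbhd p N0 \<subseteq> U" and "subgroup U (S_grp p)"
    using assms(3) by (auto simp: open_subgroup_S_def)
  then have "U \<subseteq> S_set p"
    using subgroup.subset by (force simp: S_grp_def)
  then have hU: "h \<in> U" and "h \<in> S_set p"
    using assms(5) subset by auto
  then obtain m q where h_eq: "h = fps_X + fps_X ^ m * q" and q0: "q $ 0 \<noteq> 0"
    and m2: "2 \<le> m" and m_mod: "m mod p = 0 \<or> m mod p = 1"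
    using assms(6) S_set_elem_eq_X_plus_X_power_mult by blast
  obtain n where n: "max N N0 \<le> n" "p \<le> n" and mn_mod: "m mod p + n mod p = 1"
    using exists_large_exponent_with_complementary_residue[OF assms(1) m_mod] by blast
  define g :: "'a fps" where "g = fps_X + fps_X ^ n"
  have "g \<in> S_nbhd p N0"
    unfolding g_def using n mn_mod assms(1) by (intro X_plus_X_power_in_S_nbhd) auto
  then have gU: "g \<in> U"
    using N0 by blast
  obtain F where F: "(h oo g) - (g oo h) = fps_X ^ (m + n - 1) * F"
    and F0: "F $ 0 = (of_nat m - of_nat n) * q $ 0"
    using fps_commutator_X_plus_X_power[of m n q] m2 n assms(1) by (auto simp: h_eq g_def)
  have "F $ 0 \<noteq> 0"
    using F0 q0 of_nat_diff_nonzero_if_mod_sum_one[OF _ mn_mod] CHAR_dvd_CARD assms(2) by auto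
  define k where "k = inv\<^bsub>G\<^esub> (g oo h)"
  have k_inv: "k oo (g oo h) = fps_X"
    using l_inv[of "g \<otimes>\<^bsub>G\<^esub> h"] m_closed[of g h] gU hU by (simp add: k_def)
  define c where "c = k oo (h oo g)"
  have "c \<in> H"
    using commutator_closed[OF assms(5)] gU by (simp add: c_def k_def)
  moreover have "c \<noteq> fps_X"
  proof
    assume "c = fps_X"
    then have "h oo g = g oo h"
      using commutator_eq_one_iff[of g h] gU hU by (simp add: c_def k_def)
    then show False
      using F \<open>F $ 0 \<noteq> 0\<close> by simp
  qed
  moreover have "cong_mod_tpow c fps_X N"
  proof -
    have agree: "(h oo g) $ i = (g oo h) $ i" if "i < m + n - 1" for i
      using arg_cong[OF F, of "\<lambda>f. f $ i"] that by (simp add: fps_X_power_mult_nth)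
    have "c $ i = fps_X $ i" if "i < N" for i
    proof -
      have "i < m + n - 1"
        using that n m2 by auto
      then show ?thesis
        unfolding c_def k_inv[symmetric] using fps_compose_nth_agree_below[of "m + n - 1" "h oo g" "g oo h" i k] agree by blast
    qed
    then show ?thesis
      by (simp add: cong_mod_tpow_def)
  qed
  ultimately show ?thesis
    by blast
qed

theorem proposition5p6:
  fixes p :: nat and U H :: "('a::{field,finite}) fps set"
  assumes "prime p" and "card (UNIV :: 'a set) = p"
    and "open_subgroup_S p U"
    and "closed_in_S p H"
    and "normal H ((S_grp p)\<lparr>carrier := U\<rparr>)"
    and "H \<noteq> {fps_X}"
  shows "infinite H \<and>
         (\<forall>N\<ge>1. \<exists>h\<in>H. h \<noteq> fps_X \<and> cong_mod_tpow h fps_X N)"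
proof -
  have "fps_X \<in> H"
    using normal.axioms(1)[OF assms(5)] subgroup.one_closed by (fastforce simp: S_grp_def)
  then obtain h where "h \<in> H" and "h \<noteq> fps_X"
    using assms(6) by blast
  then have deep: "\<exists>c\<in>H. c \<noteq> fps_X \<and> cong_mod_tpow c fps_X N" for N
    using normal_subgroup_of_open_subgroup_has_deep_elements prime_ge_2_nat assms by blast
  then have "infinite H"
    by (rule infinite_if_arbitrarily_close_elements)
  with deep show ?thesis
    by blast
qed

end
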